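(* The function $f:(0,\infty)\to\mathbb{R}$, $f(x)=\sin(\log x)$, is amenable.
   Context: Relative distance on $\mathbb{R}$: $\mathrm{dist}(x,y)=0$ if $x=y=0$, $\mathrm{dist}(x,y)=|\log(y/x)|$ if $xy>0$, and $\mathrm{dist}(x,y)=\infty$ otherwise. For a real analytic function $f$ on an open set $\Omega\subseteq\mathbb{R}$, not identically zero, the condition number is $\kappa(f,x)=0$ if $x=0$, $\kappa(f,x)=\infty$ if $x\neq0$ and $f(x)=0$, and $\kappa(f,x)=|x|\,|f'(x)|/|f(x)|$ otherwise; $\mu(f,x)=1+\kappa(f,x)$. $f:\Omega\to\mathbb{R}$ is amenable if there is $C>0$ such that for every $x\in\Omega$ with $\kappa(f,x)<\infty$, the set $B_x=\{y\in\mathbb{R}:\mathrm{dist}(y,x)<1/(C\mu(f,x))\}$ is contained in $\Omega$ and $\mu(f,y)\leq C\mu(f,x)$ for all $y\in B_x$. *)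

theory Defs
  imports "HOL-Analysis.Analysis" "HOL-Library.Extended_Real"
begin

definition reldist :: "real \<Rightarrow> real \<Rightarrow> ereal" where
  "reldist x y =
     (if x = 0 \<and> y = 0 then 0
      else if x * y > 0 then ereal \<bar>ln (y / x)\<bar>
      else \<infinity>)"

definition kappa :: "(real \<Rightarrow> real) \<Rightarrow> real \<Rightarrow> ereal" where
  "kappa f x =
     (if x = 0 then 0
      else if f x = 0 then \<infinity>
      else ereal (\<bar>x\<bar> * \<bar>deriv f x\<bar> / \<bar>f x\<bar>))"

definition mu :: "(real \<Rightarrow> real) \<Rightarrow> real \<Rightarrow> ereal" where
  "mu f x = 1 + kappa f x"

definition amenable :: "(real \<Rightarrow> real) \<Rightarrow> real set \<Rightarrow> bool" where
  "amenable f \<Omega> \<longleftrightarrow>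
     (\<exists>C::real. C > 0 \<and>
        (\<forall>x\<in>\<Omega>. kappa f x < \<infinity> \<longrightarrow>
           (let B = {y. reldist y x < 1 / (ereal C * mu f x)} in
              B \<subseteq> \<Omega> \<and> (\<forall>y\<in>B. mu f y \<le> ereal C * mu f x))))"

end

theory Submission
  imports Defs
begin

text \<open>In the coordinate \<open>t = ln x\<close> the relative distance becomes \<open>\<bar>s - t\<bar>\<close> and
  \<open>\<mu>(f, x) = 1 + \<bar>cos t\<bar> / \<bar>sin t\<bar>\<close>, which lies between \<open>1 / \<bar>sin t\<bar>\<close> and \<open>2 / \<bar>sin t\<bar>\<close>.
  Since sine is 1-Lipschitz, \<open>\<bar>s - t\<bar> < \<bar>sin t\<bar> / 3\<close> forces \<open>\<bar>sin s\<bar> \<ge> 2 \<bar>sin t\<bar> / 3\<close>,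
  hence \<open>\<mu>\<close> changes by at most a factor 3 on such balls; so \<open>C = 3\<close> works.\<close>

lemma reldist_pos_eq:
  assumes "x > 0" "y > 0"
  shows "reldist y x = ereal \<bar>ln y - ln x\<bar>"
  using assms by (simp add: reldist_def ln_div abs_minus_commute)

lemma reldist_nonpos_eq_infinity:
  assumes "x > 0" "\<not> y > 0"
  shows "reldist y x = \<infinity>"
  using assms by (auto simp: reldist_def zero_less_mult_iff)

lemma kappa_comp_ln:
  assumes h': "\<And>t. (h has_real_derivative h' t) (at t)" and "x > 0"
  shows "kappa (\<lambda>x. h (ln x)) x =
    (if h (ln x) = 0 then \<infinity> else ereal (\<bar>h' (ln x)\<bar> / \<bar>h (ln x)\<bar>))"
proof -
  have "((\<lambda>x. h (ln x)) has_real_derivative h' (ln x) / x) (at x)"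
    using DERIV_chain2[OF h' DERIV_ln[OF \<open>x > 0\<close>]] by (simp add: divide_inverse)
  then have "deriv (\<lambda>x. h (ln x)) x = h' (ln x) / x"
    by (rule DERIV_imp_deriv)
  with \<open>x > 0\<close> show ?thesis
    by (simp add: kappa_def abs_divide)
qed

lemma amenable_comp_lnI:
  fixes C :: real
  assumes h': "\<And>t. (h has_real_derivative h' t) (at t)" and "C > 0"
    and local_bound: "\<And>s t. h t \<noteq> 0 \<Longrightarrow> \<bar>s - t\<bar> < 1 / (C * (1 + \<bar>h' t\<bar> / \<bar>h t\<bar>)) \<Longrightarrow>
      h s \<noteq> 0 \<and> 1 + \<bar>h' s\<bar> / \<bar>h s\<bar> \<le> C * (1 + \<bar>h' t\<bar> / \<bar>h t\<bar>)"
  shows "amenable (\<lambda>x. h (ln x)) {0<..}"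
  unfolding amenable_def Let_def
proof (intro exI[of _ C] conjI ballI impI subsetI)
  show "C > 0" by fact
  fix x assume "x \<in> {0<..}" and finite: "kappa (\<lambda>x. h (ln x)) x < \<infinity>"
  then have "x > 0" by simp
  have mu_eq: "mu (\<lambda>x. h (ln x)) z = ereal (1 + \<bar>h' (ln z)\<bar> / \<bar>h (ln z)\<bar>)"
    if "z > 0" "h (ln z) \<noteq> 0" for z
    using that by (simp add: mu_def kappa_comp_ln[OF h'] one_ereal_def)
  have hx: "h (ln x) \<noteq> 0"
    using finite by (simp add: kappa_comp_ln[OF h' \<open>x > 0\<close>] split: if_splits)
  define m where "m = 1 + \<bar>h' (ln x)\<bar> / \<bar>h (ln x)\<bar>"
  have mu_x: "mu (\<lambda>x. h (ln x)) x = ereal m"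
    using mu_eq[OF \<open>x > 0\<close> hx] by (simp add: m_def)
  have "m \<ge> 1" by (simp add: m_def)
  then have radius: "1 / (ereal C * mu (\<lambda>x. h (ln x)) x) = ereal (1 / (C * m))"
    using \<open>C > 0\<close> by (simp add: mu_x one_ereal_def)
  have in_ball: "y > 0 \<and> \<bar>ln y - ln x\<bar> < 1 / (C * m)"
    if "y \<in> {y. reldist y x < 1 / (ereal C * mu (\<lambda>x. h (ln x)) x)}" for y
  proof -
    have close: "reldist y x < ereal (1 / (C * m))" using that radius by simp
    then have "y > 0" using reldist_nonpos_eq_infinity[OF \<open>x > 0\<close>] by force
    with close show ?thesis by (simp add: reldist_pos_eq[OF \<open>x > 0\<close>])
  qed
  show "y \<in> {0<..}"
    if "y \<in> {y. reldist y x < 1 / (ereal C * mu (\<lambda>x. h (ln x)) x)}" for y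
    using in_ball[OF that] by simp
  show "mu (\<lambda>x. h (ln x)) y \<le> ereal C * mu (\<lambda>x. h (ln x)) x"
    if "y \<in> {y. reldist y x < 1 / (ereal C * mu (\<lambda>x. h (ln x)) x)}" for y
  proof -
    have "y > 0" and "\<bar>ln y - ln x\<bar> < 1 / (C * m)" using in_ball[OF that] by auto
    then have "h (ln y) \<noteq> 0" and "1 + \<bar>h' (ln y)\<bar> / \<bar>h (ln y)\<bar> \<le> C * m"
      using local_bound[OF hx, of "ln y"] unfolding m_def by auto
    with \<open>y > 0\<close> show ?thesis by (simp add: mu_eq mu_x)
  qed
qed

lemma abs_sin_diff_le: "\<bar>sin (s::real) - sin t\<bar> \<le> \<bar>s - t\<bar>"
proof -
  have "\<bar>sin s - sin t\<bar> = 2 * \<bar>sin ((s - t) / 2)\<bar> * \<bar>cos ((s + t) / 2)\<bar>"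
    by (simp add: sin_diff_sin abs_mult)
  also have "\<dots> \<le> 2 * \<bar>(s - t) / 2\<bar> * 1"
    by (intro mult_mono abs_sin_x_le_abs_x) auto
  finally show ?thesis by simp
qed

lemma abs_sin_add_abs_cos_ge_1: "\<bar>sin (t::real)\<bar> + \<bar>cos t\<bar> \<ge> 1"
proof -
  have square_le: "x\<^sup>2 \<le> \<bar>x\<bar>" if "\<bar>x\<bar> \<le> 1" for x :: real
  proof -
    have "x\<^sup>2 = \<bar>x\<bar> * \<bar>x\<bar>" by (simp add: power2_eq_square)
    also have "\<dots> \<le> \<bar>x\<bar> * 1" using that by (intro mult_left_mono) auto
    finally show ?thesis by simp
  qed
  have "sin t ^ 2 \<le> \<bar>sin t\<bar>" "cos t ^ 2 \<le> \<bar>cos t\<bar>"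
    by (simp_all add: square_le abs_sin_le_one abs_cos_le_one)
  then show ?thesis using sin_cos_squared_add[of t] by linarith
qed

lemma inverse_abs_sin_le_sin_condition:
  fixes t :: real
  assumes "sin t \<noteq> 0"
  shows "1 / \<bar>sin t\<bar> \<le> 1 + \<bar>cos t\<bar> / \<bar>sin t\<bar>"
  using abs_sin_add_abs_cos_ge_1[of t] assms by (simp add: field_simps)

lemma sin_condition_le_two_div_abs_sin:
  fixes t :: real
  assumes "sin t \<noteq> 0"
  shows "1 + \<bar>cos t\<bar> / \<bar>sin t\<bar> \<le> 2 / \<bar>sin t\<bar>"
proof -
  have "1 \<le> 1 / \<bar>sin t\<bar>"
    using abs_sin_le_one[of t] assms by (simp add: field_simps)
  moreover have "\<bar>cos t\<bar> / \<bar>sin t\<bar> \<le> 1 / \<bar>sin t\<bar>"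
    using abs_cos_le_one[of t] by (simp add: divide_right_mono)
  ultimately show ?thesis by simp
qed

lemma sin_condition_local_bound:
  fixes s t :: real
  assumes "sin t \<noteq> 0"
    and close: "\<bar>s - t\<bar> < 1 / (3 * (1 + \<bar>cos t\<bar> / \<bar>sin t\<bar>))"
  shows "sin s \<noteq> 0 \<and> 1 + \<bar>cos s\<bar> / \<bar>sin s\<bar> \<le> 3 * (1 + \<bar>cos t\<bar> / \<bar>sin t\<bar>)"
proof -
  have lower: "1 / \<bar>sin t\<bar> \<le> 1 + \<bar>cos t\<bar> / \<bar>sin t\<bar>"
    using inverse_abs_sin_le_sin_condition[OF \<open>sin t \<noteq> 0\<close>] .
  have "0 < 1 / \<bar>sin t\<bar>" using assms by simp
  with lower have "1 / (3 * (1 + \<bar>cos t\<bar> / \<bar>sin t\<bar>)) \<le> 1 / (3 * (1 / \<bar>sin t\<bar>))"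
    by (intro divide_left_mono mult_left_mono mult_pos_pos) (auto intro: add_pos_nonneg)
  with close have "\<bar>s - t\<bar> < \<bar>sin t\<bar> / 3" by simp
  then have sin_s: "\<bar>sin s\<bar> \<ge> 2 / 3 * \<bar>sin t\<bar>"
    using abs_sin_diff_le[of s t] by linarith
  then have "sin s \<noteq> 0" using assms by auto
  have "1 + \<bar>cos s\<bar> / \<bar>sin s\<bar> \<le> 2 / \<bar>sin s\<bar>"
    using sin_condition_le_two_div_abs_sin[OF \<open>sin s \<noteq> 0\<close>] .
  also have "\<dots> \<le> 2 / (2 / 3 * \<bar>sin t\<bar>)"
    using sin_s assms by (intro divide_left_mono) auto
  also have "\<dots> = 3 * (1 / \<bar>sin t\<bar>)" by simp
  also have "\<dots> \<le> 3 * (1 + \<bar>cos t\<bar> / \<bar>sin t\<bar>)"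
    using lower by simp
  finally show ?thesis using \<open>sin s \<noteq> 0\<close> by simp
qed

theorem mainTheorem13:
  shows "amenable (\<lambda>x::real. sin (ln x)) {0<..}"
  by (rule amenable_comp_lnI[OF DERIV_sin _ sin_condition_local_bound]) simp_all

end
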